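(* There exists a constant $C>0$ such that for every integer $m\ge 5$ there exist a number of voters $n$, a distribution $\mathcal{D}$ supported on $[0,1]$, and a preference profile $\sigma$ on $n$ voters and $m$ alternatives such that every expected-welfare-maximizing rule $f$ for $\mathcal{D}$ satisfies $$\mathbb{E}[\mathrm{dist}(f(\sigma),\sigma)]\le \frac{C}{m}\cdot\max_{j\in A}\mathbb{E}[\mathrm{dist}(j,\sigma)].$$
   Context: There are $n$ voters $N=\{1,\dots,n\}$ and $m$ alternatives $A=\{1,\dots,m\}$. A preference profile $\sigma=(\sigma_1,\dots,\sigma_n)$ consists of a ranking of $A$ for each voter; position $1$ is the top. A (deterministic) voting rule $f$ maps each preference profile to an alternative. Given a distribution $\mathcal{D}$ and a profile $\sigma$, a random utility profile $u$ consistent with $\sigma$ is generated as follows: independently for each voter $i$, draw $m$ i.i.d. samples from $\mathcal{D}$ and assign them, from highest to lowest, to the alternatives in the order of $\sigma_i$. The social welfare of alternative $j$ is $\mathrm{sw}(j,u)=\sum_{i}u_{ij}$; expectations are over this random $u$. The distortion of $j$ at $\sigma$ is $\mathrm{dist}(j,\sigma)=\mathrm{sw}(j,u)/\max_{k\in A}\mathrm{sw}(k,u)$. A rule is an expected-welfare-maximizing rule for $\mathcal{D}$ if for every profile $\sigma$ it selects an alternative maximizing $\mathbb{E}[\mathrm{sw}(j,u)]$ over $j\in A$. *)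

theory Defs
  imports "HOL-Probability.Probability"
begin

text \<open>Voters are 1..n, alternatives 1..m, positions 1..m (position 1 = top).
A profile is represented by sigma :: nat => nat => nat, where sigma i p is the
alternative voter i ranks at position p.\<close>

definition is_profile :: "nat \<Rightarrow> nat \<Rightarrow> (nat \<Rightarrow> nat \<Rightarrow> nat) \<Rightarrow> bool" where
  "is_profile n m \<sigma> \<longleftrightarrow> (\<forall>i\<in>{1..n}. bij_betw (\<sigma> i) {1..m} {1..m})"

definition pos :: "nat \<Rightarrow> (nat \<Rightarrow> nat \<Rightarrow> nat) \<Rightarrow> nat \<Rightarrow> nat \<Rightarrow> nat" where
  "pos m \<sigma> i j = the_inv_into {1..m} (\<sigma> i) j"

definition kth_largest :: "nat \<Rightarrow> (nat \<Rightarrow> real) \<Rightarrow> nat \<Rightarrow> real" where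
  "kth_largest m y p = rev (sort (map y [1..<m+1])) ! (p - 1)"

definition sample_space :: "nat \<Rightarrow> nat \<Rightarrow> real measure \<Rightarrow> (nat \<times> nat \<Rightarrow> real) measure" where
  "sample_space n m D = PiM ({1..n} \<times> {1..m}) (\<lambda>_. D)"

text \<open>Utility u_ij: the samples of voter i, sorted from highest to lowest, are
assigned to the alternatives in the order of sigma i.\<close>
definition util :: "nat \<Rightarrow> (nat \<Rightarrow> nat \<Rightarrow> nat) \<Rightarrow> (nat \<times> nat \<Rightarrow> real) \<Rightarrow> nat \<Rightarrow> nat \<Rightarrow> real" where
  "util m \<sigma> x i j = kth_largest m (\<lambda>k. x (i, k)) (pos m \<sigma> i j)"

definition sw :: "nat \<Rightarrow> nat \<Rightarrow> (nat \<Rightarrow> nat \<Rightarrow> nat) \<Rightarrow> (nat \<times> nat \<Rightarrow> real) \<Rightarrow> nat \<Rightarrow> real" where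
  "sw n m \<sigma> x j = (\<Sum>i\<in>{1..n}. util m \<sigma> x i j)"

definition max_sw :: "nat \<Rightarrow> nat \<Rightarrow> (nat \<Rightarrow> nat \<Rightarrow> nat) \<Rightarrow> (nat \<times> nat \<Rightarrow> real) \<Rightarrow> real" where
  "max_sw n m \<sigma> x = Max ((\<lambda>k. sw n m \<sigma> x k) ` {1..m})"

definition dist_alt :: "nat \<Rightarrow> nat \<Rightarrow> (nat \<Rightarrow> nat \<Rightarrow> nat) \<Rightarrow> (nat \<times> nat \<Rightarrow> real) \<Rightarrow> nat \<Rightarrow> real" where
  "dist_alt n m \<sigma> x j = sw n m \<sigma> x j / max_sw n m \<sigma> x"

definition exp_sw :: "nat \<Rightarrow> nat \<Rightarrow> real measure \<Rightarrow> (nat \<Rightarrow> nat \<Rightarrow> nat) \<Rightarrow> nat \<Rightarrow> real" where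
  "exp_sw n m D \<sigma> j = (\<integral>x. sw n m \<sigma> x j \<partial>sample_space n m D)"

definition exp_dist :: "nat \<Rightarrow> nat \<Rightarrow> real measure \<Rightarrow> (nat \<Rightarrow> nat \<Rightarrow> nat) \<Rightarrow> nat \<Rightarrow> real" where
  "exp_dist n m D \<sigma> j = (\<integral>x. dist_alt n m \<sigma> x j \<partial>sample_space n m D)"

definition ewm_rule :: "nat \<Rightarrow> nat \<Rightarrow> real measure \<Rightarrow> ((nat \<Rightarrow> nat \<Rightarrow> nat) \<Rightarrow> nat) \<Rightarrow> bool" where
  "ewm_rule n m D f \<longleftrightarrow> (\<forall>\<sigma>. is_profile n m \<sigma> \<longrightarrow>
      f \<sigma> \<in> {1..m} \<and> (\<forall>j\<in>{1..m}. exp_sw n m D \<sigma> j \<le> exp_sw n m D \<sigma> (f \<sigma>)))"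

definition distr_on_unit :: "real measure \<Rightarrow> bool" where
  "distr_on_unit D \<longleftrightarrow> prob_space D \<and> sets D = sets borel \<and> measure D {0..1} = 1"

end

theory Submission
  imports Defs
begin

text \<open>
  Fix \<open>m \<ge> 5\<close>, put \<open>t = m\<^sup>3\<close> and \<open>n = (m - 1) t\<close>, and let utilities be drawn from a three-point
  distribution: the value 1 with the tiny probability \<open>r = 1 / (n m\<^sup>2)\<close>, a medium value
  \<open>a = r / (4 m)\<close> with probability \<open>4 / m\<close>, and the negligible value \<open>a / m\<close> otherwise.
  Each alternative \<open>j \<ge> 2\<close> is ranked first by \<open>t\<close> voters and alternative 1 is ranked second by
  everybody.

  In expectation alternative 2 collects at least \<open>t r\<close>, since each of its \<open>t\<close> supporters
  contributes the largest of \<open>m\<close> samples, which is 1 with probability at least \<open>r\<close>.  Alternative 1 collects at most \<open>n (a + m\<^sup>2 r\<^sup>2)\<close>,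
  which is smaller: a second largest sample is 1 only if two samples are 1.  So every
  expected-welfare-maximizing rule avoids alternative 1.

  On the other hand, the expected number of samples equal to 1 is only \<open>1 / m\<close>.  With probability
  at least \<open>1 - 3 / m\<close> no sample is 1, at least \<open>n / 4\<close> voters have two medium samples (so alternative 1
  gets welfare \<open>\<ge> a n / 4\<close>), and by Hoeffding's inequality every \<open>j \<ge> 2\<close> gets the medium value from
  fewer than \<open>6 t\<close> voters (welfare \<open>\<le> 7 t a\<close>).  On this typical event alternative 1 has
  distortion at least \<open>1 / 8\<close> and every other alternative at most \<open>35 / m\<close>, whence the chosen
  alternative has expected distortion at most \<open>38 / m \<le> (760 / m) E dist(1)\<close>.
\<close>

section \<open>Order statistics\<close>

definition count_ge :: "nat \<Rightarrow> real \<Rightarrow> (nat \<Rightarrow> real) \<Rightarrow> nat" where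
  "count_ge m \<theta> y = card {k\<in>{1..m}. \<theta> \<le> y k}"

lemma real_count_ge: "real (count_ge m \<theta> y) = (\<Sum>k\<in>{1..m}. of_bool (\<theta> \<le> y k))"
  unfolding count_ge_def by (simp add: Int_def conj_commute)

lemma count_ge_le: "count_ge m \<theta> y \<le> m"
  unfolding count_ge_def by (rule order.trans[OF card_mono[of "{1..m}"]]) auto

lemma count_ge_at_least_2E:
  assumes "2 \<le> count_ge m \<theta> y"
  obtains k k' where "k \<in> {1..m}" "k' \<in> {1..m}" "k \<noteq> k'" "\<theta> \<le> y k" "\<theta> \<le> y k'"
proof -
  have "\<not> card {k\<in>{1..m}. \<theta> \<le> y k} \<le> Suc 0" using assms by (simp add: count_ge_def)
  then show ?thesis using that by (auto simp: card_le_Suc0_iff_eq)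
qed

lemma count_ge_less_2E:
  assumes "count_ge m \<theta> y < 2"
  obtains "\<And>k. k \<in> {1..m} \<Longrightarrow> y k < \<theta>"
    | k where "k \<in> {1..m}" "\<theta> \<le> y k" "\<And>j. j \<in> {1..m} \<Longrightarrow> j \<noteq> k \<Longrightarrow> y j < \<theta>"
proof -
  define S where "S = {k\<in>{1..m}. \<theta> \<le> y k}"
  have "card S \<le> 1" using assms by (simp add: S_def count_ge_def)
  then consider "S = {}" | k where "S = {k}" by (auto simp: S_def card_le_Suc0_iff_eq)
  then show ?thesis
  proof cases
    case 1
    show ?thesis
    proof (rule that(1))
      fix k assume "k \<in> {1..m}"
      moreover have "k \<notin> S" using 1 by simp
      ultimately show "y k < \<theta>" by (simp add: S_def not_le)
    qed
  next
    case (2 k)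
    then have "k \<in> {1..m}" "\<theta> \<le> y k" by (auto simp: S_def)
    moreover have "y j < \<theta>" if j: "j \<in> {1..m}" "j \<noteq> k" for j
    proof -
      have "j \<notin> S" using 2 j(2) by simp
      with j(1) show ?thesis by (simp add: S_def not_le)
    qed
    ultimately show ?thesis by (rule that(2))
  qed
qed

lemma sorted_nth_ge_iff_card:
  fixes ys :: "'a::linorder list"
  assumes "sorted ys" "length ys = m" "1 \<le> p" "p \<le> m"
  shows "\<theta> \<le> ys ! (m - p) \<longleftrightarrow> p \<le> card {i. i < m \<and> \<theta> \<le> ys ! i}"
proof
  assume "\<theta> \<le> ys ! (m - p)"
  moreover have "ys ! (m - p) \<le> ys ! i" if "i \<in> {m-p..<m}" for i
    using that assms by (auto intro: sorted_nth_mono)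
  ultimately have "{m-p..<m} \<subseteq> {i. i < m \<and> \<theta> \<le> ys ! i}"
    by fastforce
  from card_mono[OF _ this] show "p \<le> card {i. i < m \<and> \<theta> \<le> ys ! i}"
    using assms by auto
next
  assume card_ge: "p \<le> card {i. i < m \<and> \<theta> \<le> ys ! i}"
  show "\<theta> \<le> ys ! (m - p)"
  proof (rule ccontr)
    assume "\<not> \<theta> \<le> ys ! (m - p)"
    then have "{i. i < m \<and> \<theta> \<le> ys ! i} \<subseteq> {m-p+1..<m}"
      using assms by (auto simp: not_less_eq_eq dest: sorted_nth_mono[of ys _ "m - p"])
    from card_mono[OF _ this] card_ge assms show False by auto
  qed
qed

lemma kth_largest_ge_iff:
  assumes "1 \<le> p" "p \<le> m"
  shows "\<theta> \<le> kth_largest m y p \<longleftrightarrow> p \<le> count_ge m \<theta> y"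
proof -
  define xs where "xs = map y [1..<m+1]"
  define ys where "ys = sort xs"
  have len: "length ys = m" by (simp add: ys_def xs_def)
  have "kth_largest m y p = ys ! (m - p)"
    unfolding kth_largest_def xs_def[symmetric] ys_def[symmetric] using assms len
    by (simp add: rev_nth)
  moreover have "card {i. i < m \<and> \<theta> \<le> ys ! i} = length (filter ((\<le>) \<theta>) ys)"
    using len by (simp add: length_filter_conv_card)
  moreover have "length (filter ((\<le>) \<theta>) ys) = length (filter ((\<le>) \<theta>) xs)"
    unfolding ys_def by (metis mset_filter mset_sort size_mset)
  moreover have "length (filter ((\<le>) \<theta>) xs) = count_ge m \<theta> y"
  proof -
    have "length (filter ((\<le>) \<theta>) xs) = length (filter (\<lambda>k. \<theta> \<le> y k) [1..<m+1])"
      by (simp add: xs_def filter_map comp_def del: upt_Suc)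
    also have "\<dots> = card ({k. \<theta> \<le> y k} \<inter> set [1..<m+1])"
      by (rule distinct_length_filter) simp
    also have "{k. \<theta> \<le> y k} \<inter> set [1..<m+1] = {k\<in>{1..m}. \<theta> \<le> y k}" by auto
    finally show ?thesis by (simp add: count_ge_def)
  qed
  ultimately show ?thesis using sorted_nth_ge_iff_card[of ys m p \<theta>] len assms
    by (simp add: ys_def)
qed

lemma kth_largest_1_ge:
  assumes "k \<in> {1..m}"
  shows "y k \<le> kth_largest m y 1"
proof -
  have "{k'\<in>{1..m}. y k \<le> y k'} \<noteq> {}" using assms by blast
  then have "1 \<le> count_ge m (y k) y" by (simp add: count_ge_def card_gt_0_iff Suc_le_eq)
  then show ?thesis using kth_largest_ge_iff[of 1 m] assms by simp
qed

lemma kth_largest_mem: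
  assumes "1 \<le> p" "p \<le> m"
  shows "kth_largest m y p \<in> y ` {1..m}"
proof -
  have "kth_largest m y p \<in> set (rev (sort (map y [1..<m+1])))"
    unfolding kth_largest_def using assms by (intro nth_mem) simp
  then show ?thesis by auto
qed

lemma kth_largest_in:
  assumes "1 \<le> p" "p \<le> m" "\<And>k. k \<in> {1..m} \<Longrightarrow> y k \<in> V"
  shows "kth_largest m y p \<in> V"
  using kth_largest_mem[OF assms(1,2), of y] assms(3) by auto

lemma kth_largest_cong:
  assumes "\<And>k. k \<in> {1..m} \<Longrightarrow> y k = z k"
  shows "kth_largest m y p = kth_largest m z p"
proof -
  have "map y [1..<m+1] = map z [1..<m+1]" using assms by (intro map_cong) auto
  then show ?thesis unfolding kth_largest_def by (simp only:)
qed

lemma measurable_count_ge [measurable]: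
  assumes [measurable]: "\<And>k. k \<in> {1..m} \<Longrightarrow> g k \<in> borel_measurable M"
  shows "Measurable.pred M (\<lambda>x. p \<le> count_ge m \<theta> (\<lambda>k. g k x))"
proof -
  have "Measurable.pred M (\<lambda>x. real p \<le> (\<Sum>k\<in>{1..m}. of_bool (\<theta> \<le> g k x)))"
    by measurable
  then show ?thesis by (simp only: real_count_ge[symmetric] of_nat_le_iff)
qed

lemma measurable_kth_largest [measurable]:
  assumes [measurable]: "\<And>k. k \<in> {1..m} \<Longrightarrow> g k \<in> borel_measurable M"
    and "1 \<le> p" "p \<le> m"
  shows "(\<lambda>x. kth_largest m (\<lambda>k. g k x) p) \<in> borel_measurable M"
  unfolding borel_measurable_iff_ge
proof
  fix \<theta>
  have "{x \<in> space M. \<theta> \<le> kth_largest m (\<lambda>k. g k x) p} = {x \<in> space M. p \<le> count_ge m \<theta> (\<lambda>k. g k x)}"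
    using kth_largest_ge_iff[OF \<open>1 \<le> p\<close> \<open>p \<le> m\<close>] by auto
  also have "\<dots> \<in> sets M" by measurable
  finally show "{x \<in> space M. \<theta> \<le> kth_largest m (\<lambda>k. g k x) p} \<in> sets M" .
qed

section \<open>Voters with independent samples in [0, 1]\<close>

lemma (in finite_measure) integrable_of_bool [intro]:
  "Measurable.pred M P \<Longrightarrow> integrable M (\<lambda>x. of_bool (P x) :: real)"
  by (intro integrable_const_bound[where B=1]) auto

lemma (in finite_measure) integral_of_bool:
  assumes [measurable]: "Measurable.pred M P"
  shows "(\<integral>x. of_bool (P x) \<partial>M) = measure M {x\<in>space M. P x}"
proof -
  have "(\<integral>x. of_bool (P x) \<partial>M) = (\<integral>x. indicator {x\<in>space M. P x} x \<partial>M)"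
    by (intro Bochner_Integration.integral_cong) (auto simp: indicator_def)
  also have "\<dots> = measure M {x\<in>space M. P x}"
    by (simp add: Int_absorb2)
  finally show ?thesis .
qed

lemma sw_le_max_sw: "j \<in> {1..m} \<Longrightarrow> sw n m \<sigma> x j \<le> max_sw n m \<sigma> x"
  unfolding max_sw_def by (intro Max_ge) auto

lemma dist_alt_bounds:
  assumes "j \<in> {1..m}" "0 \<le> sw n m \<sigma> x j"
  shows "0 \<le> dist_alt n m \<sigma> x j \<and> dist_alt n m \<sigma> x j \<le> 1"
  using assms sw_le_max_sw[OF assms(1), of n \<sigma> x] by (auto simp: dist_alt_def divide_le_eq_1)

lemma pos_mem:
  assumes "is_profile n m \<sigma>" "i \<in> {1..n}" "j \<in> {1..m}"
  shows "pos m \<sigma> i j \<in> {1..m}"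
proof -
  have "bij_betw (\<sigma> i) {1..m} {1..m}" using assms(1,2) by (simp add: is_profile_def)
  then show ?thesis unfolding pos_def bij_betw_def using assms(3) by (intro the_inv_into_into) auto
qed

lemma util_mem_samples:
  assumes "is_profile n m \<sigma>" "i \<in> {1..n}" "j \<in> {1..m}"
  shows "util m \<sigma> x i j \<in> (\<lambda>k. x (i, k)) ` {1..m}"
  unfolding util_def using pos_mem[OF assms] by (intro kth_largest_mem) auto

locale unit_voters =
  fixes n m :: nat and D :: "real measure"
  assumes distr_on_unit_D: "distr_on_unit D"
begin

lemma prob_space_D: "prob_space D"
  using distr_on_unit_D by (simp add: distr_on_unit_def)

lemma sets_D [measurable_cong]: "sets D = sets borel"
  using distr_on_unit_D by (simp add: distr_on_unit_def)

lemma space_D [simp]: "space D = UNIV"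
  using sets_eq_imp_space_eq[OF sets_D] by simp

lemma AE_D_unit: "AE x in D. x \<in> {0..1}"
  using distr_on_unit_D prob_space.AE_in_set_eq_1[OF prob_space_D, of "{0..1}"]
  by (simp add: distr_on_unit_def)

definition voter_space :: "(nat \<Rightarrow> real) measure" where
  "voter_space = PiM {1..m} (\<lambda>_. D)"

definition voter_sample :: "nat \<Rightarrow> (nat \<times> nat \<Rightarrow> real) \<Rightarrow> nat \<Rightarrow> real" where
  "voter_sample i x = (\<lambda>k\<in>{1..m}. x (i, k))"

lemma prob_space_voter_space: "prob_space voter_space"
  unfolding voter_space_def by (intro prob_space_PiM prob_space_D)

lemma prob_space_sample_space: "prob_space (sample_space n m D)"
  unfolding sample_space_def by (intro prob_space_PiM prob_space_D)

lemma space_voter_space: "space voter_space = PiE {1..m} (\<lambda>_. UNIV)"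
  by (simp add: voter_space_def space_PiM sets_D cong: sets_eq_imp_space_eq)

lemma measurable_voter_component [measurable]:
  "k \<in> {1..m} \<Longrightarrow> (\<lambda>y. y k) \<in> borel_measurable voter_space"
  unfolding voter_space_def
  using measurable_component_singleton[of k "{1..m}" "\<lambda>_. D"] measurable_cong_sets[OF refl sets_D]
  by blast

lemma measurable_sample_component [measurable]:
  "i \<in> {1..n} \<Longrightarrow> k \<in> {1..m} \<Longrightarrow> (\<lambda>x. x (i, k)) \<in> borel_measurable (sample_space n m D)"
  unfolding sample_space_def
  using measurable_component_singleton[of "(i, k)" "{1..n} \<times> {1..m}" "\<lambda>_. D"] measurable_cong_sets[OF refl sets_D]
  by blast

lemma sets_voter_space_PiE [measurable]:
  "(\<And>k. k \<in> {1..m} \<Longrightarrow> A k \<in> sets borel) \<Longrightarrow> PiE {1..m} A \<in> sets voter_space"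
  unfolding voter_space_def by (intro sets_PiM_I_finite) auto

lemma measure_voter_space_PiE:
  assumes "\<And>k. k \<in> {1..m} \<Longrightarrow> A k \<in> sets borel"
  shows "measure voter_space (PiE {1..m} A) = (\<Prod>k\<in>{1..m}. measure D (A k))"
proof -
  interpret D: prob_space D by (rule prob_space_D)
  interpret product_prob_space "\<lambda>_::nat. D" by (intro product_prob_spaceI prob_space_D)
  have "emeasure voter_space (PiE {1..m} A) = (\<Prod>k\<in>{1..m}. emeasure D (A k))"
    unfolding voter_space_def by (rule emeasure_PiM) (use assms in auto)
  also have "\<dots> = ennreal (\<Prod>k\<in>{1..m}. measure D (A k))"
    by (simp add: D.emeasure_eq_measure prod_ennreal)
  finally show ?thesis by (simp add: measure_def prod_nonneg)
qed

lemma measure_voter_space_component: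
  assumes "k \<in> {1..m}" "A \<in> sets borel"
  shows "measure voter_space {y\<in>space voter_space. y k \<in> A} = measure D A"
proof -
  have "{y\<in>space voter_space. y k \<in> A} = PiE {1..m} (\<lambda>j. if j = k then A else UNIV)"
    using assms by (auto simp: space_voter_space PiE_iff extensional_def split: if_splits)
  also have "measure voter_space \<dots> = (\<Prod>j\<in>{1..m}. measure D (if j = k then A else UNIV))"
    using assms by (intro measure_voter_space_PiE) auto
  also have "\<dots> = (\<Prod>j\<in>{1..m}. if j = k then measure D A else 1)"
    using prob_space.prob_space[OF prob_space_D] by (intro prod.cong) auto
  also have "\<dots> = measure D A" using assms by (simp add: prod.delta')
  finally show ?thesis .
qed

lemma measure_sample_space_component:
  assumes "i \<in> {1..n}" "k \<in> {1..m}" "A \<in> sets borel"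
  shows "measure (sample_space n m D) {x\<in>space (sample_space n m D). x (i, k) \<in> A} = measure D A"
proof -
  let ?\<Omega> = "sample_space n m D"
  have ik: "(i, k) \<in> {1..n} \<times> {1..m}" using assms by simp
  have comp: "(\<lambda>x. x (i, k)) \<in> measurable ?\<Omega> D"
    unfolding sample_space_def using ik by (rule measurable_component_singleton)
  have "measure D A = measure (distr ?\<Omega> D (\<lambda>x. x (i, k))) A"
    unfolding sample_space_def using ik prob_space_D by (subst distr_PiM_component) auto
  also have "\<dots> = measure ?\<Omega> ((\<lambda>x. x (i, k)) -` A \<inter> space ?\<Omega>)"
    using comp assms by (intro measure_distr) auto
  finally show ?thesis by (simp add: Int_def conj_commute)
qed

lemma AE_voter_space_values:
  "AE x in D. x \<in> V \<Longrightarrow> AE y in voter_space. \<forall>k\<in>{1..m}. y k \<in> V"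
  unfolding voter_space_def
  by (intro AE_finite_allI AE_PiM_component[where P="\<lambda>x. x \<in> V"] prob_space_D) auto

lemma AE_sample_space_values:
  assumes "AE x in D. x \<in> V"
  shows "AE x in sample_space n m D. \<forall>i\<in>{1..n}. \<forall>k\<in>{1..m}. x (i, k) \<in> V"
proof -
  have "AE x in sample_space n m D. \<forall>c\<in>{1..n} \<times> {1..m}. x c \<in> V"
    unfolding sample_space_def
    by (intro AE_finite_allI AE_PiM_component[where P="\<lambda>x. x \<in> V"] prob_space_D assms) auto
  then show ?thesis by auto
qed

lemma measurable_voter_sample [measurable]:
  "i \<in> {1..n} \<Longrightarrow> voter_sample i \<in> measurable (sample_space n m D) voter_space"
  unfolding voter_sample_def voter_space_def sample_space_def
  by (intro measurable_restrict measurable_component_singleton) auto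

lemma distr_voter_sample:
  assumes "i \<in> {1..n}"
  shows "distr (sample_space n m D) voter_space (voter_sample i) = voter_space"
  using distr_PiM_reindex[of "{1..n} \<times> {1..m}" "\<lambda>_. D" "\<lambda>k. (i, k)" "{1..m}"] assms prob_space_D
  by (auto simp: inj_on_def sample_space_def voter_space_def voter_sample_def[abs_def])

lemma integral_voter_sample:
  fixes F :: "(nat \<Rightarrow> real) \<Rightarrow> real"
  assumes "i \<in> {1..n}" "F \<in> borel_measurable voter_space"
  shows "(\<integral>x. F (voter_sample i x) \<partial>sample_space n m D) = integral\<^sup>L voter_space F"
  using integral_distr[of "voter_sample i" "sample_space n m D" voter_space F] assms
  by (simp add: distr_voter_sample)

lemma indep_voter_samples:
  assumes "\<And>i. i \<in> {1..n} \<Longrightarrow> F i \<in> borel_measurable voter_space"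
  shows "prob_space.indep_vars (sample_space n m D) (\<lambda>_. borel) (\<lambda>i x. F i (voter_sample i x)) {1..n}"
proof -
  interpret prob_space "sample_space n m D" by (rule prob_space_sample_space)
  let ?I = "{1..n} \<times> {1..m}"
  have coordinates: "indep_vars (\<lambda>_. D) (\<lambda>c x. x c) ?I"
  proof (cases "?I = {}")
    case False
    show ?thesis
    proof (subst indep_vars_iff_distr_eq_PiM')
      show "\<And>c. c \<in> ?I \<Longrightarrow> random_variable D (\<lambda>x. x c)"
        unfolding sample_space_def by (rule measurable_component_singleton)
      have "distr (sample_space n m D) (PiM ?I (\<lambda>_. D)) (\<lambda>x. \<lambda>c\<in>?I. x c)
          = distr (sample_space n m D) (sample_space n m D) (\<lambda>x. x)"
        by (intro distr_cong) (auto simp: sample_space_def space_PiM PiE_def extensional_def fun_eq_iff)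
      also have "\<dots> = PiM ?I (\<lambda>c. distr (sample_space n m D) D (\<lambda>x. x c))"
        unfolding distr_id sample_space_def
        by (intro PiM_cong refl distr_PiM_component[symmetric] prob_space_D) auto
      finally show "distr (sample_space n m D) (PiM ?I (\<lambda>_. D)) (\<lambda>x. \<lambda>c\<in>?I. x c)
          = PiM ?I (\<lambda>c. distr (sample_space n m D) D (\<lambda>x. x c))" .
    qed (use False in auto)
  qed (auto simp: indep_vars_def indep_sets_def)
  have blocks: "indep_vars (\<lambda>i. PiM ({i} \<times> {1..m}) (\<lambda>_. D))
      (\<lambda>i x. restrict x ({i} \<times> {1..m})) {1..n}"
    by (rule indep_vars_restrict[OF coordinates]) (auto simp: disjoint_family_on_def)
  have "(\<lambda>z. F i (\<lambda>k\<in>{1..m}. z (i, k))) \<in> borel_measurable (PiM ({i} \<times> {1..m}) (\<lambda>_. D))"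
    if "i \<in> {1..n}" for i
  proof (rule measurable_compose[OF _ assms[OF that]])
    show "(\<lambda>z. \<lambda>k\<in>{1..m}. z (i, k)) \<in> measurable (PiM ({i} \<times> {1..m}) (\<lambda>_. D)) voter_space"
      unfolding voter_space_def by (intro measurable_restrict measurable_component_singleton) auto
  qed
  from indep_vars_compose2[OF blocks this]
  have "indep_vars (\<lambda>_. borel) (\<lambda>i x. F i (\<lambda>k\<in>{1..m}. restrict x ({i} \<times> {1..m}) (i, k))) {1..n}" .
  moreover have "(\<lambda>k\<in>{1..m}. restrict x ({i} \<times> {1..m}) (i, k)) = voter_sample i x" for i x
    by (auto simp: voter_sample_def fun_eq_iff)
  ultimately show ?thesis by simp
qed

lemma hoeffding_voter_count:
  assumes "n > 0" "\<epsilon> \<ge> 0" and [measurable]: "\<And>i. i \<in> {1..n} \<Longrightarrow> Measurable.pred voter_space (P i)"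
  defines "N \<equiv> \<lambda>x. \<Sum>i\<in>{1..n}. of_bool (P i (voter_sample i x))"
    and "\<mu> \<equiv> \<Sum>i\<in>{1..n}. measure voter_space {y\<in>space voter_space. P i y}"
  shows "measure (sample_space n m D) {x\<in>space (sample_space n m D). N x \<le> \<mu> - \<epsilon>} \<le> exp (-2 * \<epsilon>^2 / n)"
    and "measure (sample_space n m D) {x\<in>space (sample_space n m D). N x \<ge> \<mu> + \<epsilon>} \<le> exp (-2 * \<epsilon>^2 / n)"
proof -
  interpret prob_space "sample_space n m D" by (rule prob_space_sample_space)
  interpret V: prob_space voter_space by (rule prob_space_voter_space)
  interpret H: Hoeffding_ineq "sample_space n m D" "{1..n}" "\<lambda>i x. of_bool (P i (voter_sample i x))"
      "\<lambda>_. 0" "\<lambda>_. 1" "\<Sum>i\<in>{1..n}. expectation (\<lambda>x. of_bool (P i (voter_sample i x)))"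
    using indep_voter_samples[of "\<lambda>i y. of_bool (P i y)"] by unfold_locales auto
  have "expectation (\<lambda>x. of_bool (P i (voter_sample i x)) :: real) = measure voter_space {y\<in>space voter_space. P i y}"
    if i: "i \<in> {1..n}" for i
  proof -
    have [measurable]: "Measurable.pred voter_space (P i)" using i by simp
    have "(\<lambda>y. of_bool (P i y) :: real) \<in> borel_measurable voter_space" by measurable
    from integral_voter_sample[where F="\<lambda>y. of_bool (P i y)", OF i this]
    have "expectation (\<lambda>x. of_bool (P i (voter_sample i x)) :: real) = (\<integral>y. of_bool (P i y) \<partial>voter_space)"
      by simp
    also have "\<dots> = measure voter_space {y\<in>space voter_space. P i y}"
      by (rule V.integral_of_bool) measurable
    finally show ?thesis .
  qed
  then have \<mu>: "(\<Sum>i\<in>{1..n}. expectation (\<lambda>x. of_bool (P i (voter_sample i x)) :: real)) = \<mu>"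
    unfolding \<mu>_def by simp
  have n: "(\<Sum>i\<in>{1..n}. ((1::real) - 0)\<^sup>2) = real n" by simp
  show "prob {x\<in>space (sample_space n m D). N x \<le> \<mu> - \<epsilon>} \<le> exp (-2 * \<epsilon>^2 / n)"
    using H.Hoeffding_ineq_le[OF \<open>\<epsilon> \<ge> 0\<close>] \<open>n > 0\<close> unfolding \<mu> n N_def by simp
  show "prob {x\<in>space (sample_space n m D). N x \<ge> \<mu> + \<epsilon>} \<le> exp (-2 * \<epsilon>^2 / n)"
    using H.Hoeffding_ineq_ge[OF \<open>\<epsilon> \<ge> 0\<close>] \<open>n > 0\<close> unfolding \<mu> n N_def by simp
qed

lemma measurable_count_ge_voter_space [measurable]:
  "Measurable.pred voter_space (\<lambda>y. p \<le> count_ge m \<theta> y)"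
  using measurable_count_ge[of m "\<lambda>k y. y k" voter_space p \<theta>] by simp

lemma measurable_kth_largest_voter_space [measurable]:
  "1 \<le> p \<Longrightarrow> p \<le> m \<Longrightarrow> (\<lambda>y. kth_largest m y p) \<in> borel_measurable voter_space"
  using measurable_kth_largest[of m "\<lambda>k y. y k" voter_space p] by simp

lemma kth_largest_voter_space_unit:
  assumes "1 \<le> p" "p \<le> m"
  shows "AE y in voter_space. kth_largest m y p \<in> {0..1}"
  using AE_voter_space_values[OF AE_D_unit]
  by eventually_elim (use kth_largest_in[OF assms] in blast)

lemma integrable_kth_largest:
  assumes "1 \<le> p" "p \<le> m"
  shows "integrable voter_space (\<lambda>y. kth_largest m y p)"
proof (intro finite_measure.integrable_const_bound[where B=1] prob_space.finite_measure prob_space_voter_space)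
  show "AE y in voter_space. norm (kth_largest m y p) \<le> 1"
    using kth_largest_voter_space_unit[OF assms] by eventually_elim auto
qed (use assms in measurable)

lemma integral_kth_largest_nonneg:
  "1 \<le> p \<Longrightarrow> p \<le> m \<Longrightarrow> 0 \<le> (\<integral>y. kth_largest m y p \<partial>voter_space)"
  using kth_largest_voter_space_unit by (intro integral_nonneg_AE) (auto elim: AE_mp)

lemma sum_prob_count_ge:
  "(\<Sum>p\<in>{1..m}. measure voter_space {y\<in>space voter_space. p \<le> count_ge m \<theta> y})
    = real m * measure D {x. \<theta> \<le> x}"
proof -
  interpret V: prob_space voter_space by (rule prob_space_voter_space)
  have [measurable]: "{x. \<theta> \<le> x} \<in> sets borel" by measurable
  have "(\<Sum>p\<in>{1..m}. measure voter_space {y\<in>space voter_space. p \<le> count_ge m \<theta> y})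
      = (\<Sum>p\<in>{1..m}. \<integral>y. of_bool (p \<le> count_ge m \<theta> y) \<partial>voter_space)"
    by (intro sum.cong refl V.integral_of_bool[symmetric]) measurable
  also have "\<dots> = (\<integral>y. (\<Sum>p\<in>{1..m}. of_bool (p \<le> count_ge m \<theta> y)) \<partial>voter_space)"
    by (intro Bochner_Integration.integral_sum[symmetric] V.integrable_of_bool) measurable
  also have "\<dots> = (\<integral>y. (\<Sum>k\<in>{1..m}. of_bool (\<theta> \<le> y k)) \<partial>voter_space)"
  proof (intro Bochner_Integration.integral_cong refl)
    fix y
    have "{1..m} \<inter> {p. p \<le> count_ge m \<theta> y} = {1..count_ge m \<theta> y}"
      using count_ge_le[of m \<theta> y] by auto
    then have "(\<Sum>p\<in>{1..m}. of_bool (p \<le> count_ge m \<theta> y) :: real) = real (count_ge m \<theta> y)"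
      by simp
    then show "(\<Sum>p\<in>{1..m}. of_bool (p \<le> count_ge m \<theta> y)) = (\<Sum>k\<in>{1..m}. of_bool (\<theta> \<le> y k) :: real)"
      by (simp only: real_count_ge)
  qed
  also have "\<dots> = (\<Sum>k\<in>{1..m}. \<integral>y. of_bool (\<theta> \<le> y k) \<partial>voter_space)"
    by (intro Bochner_Integration.integral_sum V.integrable_of_bool) measurable
  also have "\<dots> = (\<Sum>k\<in>{1..m}. measure D {x. \<theta> \<le> x})"
  proof (intro sum.cong refl)
    fix k assume k: "k \<in> {1..m}"
    have "(\<integral>y. of_bool (\<theta> \<le> y k) \<partial>voter_space) = measure voter_space {y\<in>space voter_space. y k \<in> {x. \<theta> \<le> x}}"
      using k by (subst V.integral_of_bool) auto
    also have "\<dots> = measure D {x. \<theta> \<le> x}" using k by (intro measure_voter_space_component) auto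
    finally show "(\<integral>y. of_bool (\<theta> \<le> y k) \<partial>voter_space) = measure D {x. \<theta> \<le> x}" .
  qed
  finally show ?thesis by simp
qed

lemma prob_count_ge_2_le:
  "measure voter_space {y\<in>space voter_space. 2 \<le> count_ge m \<theta> y} \<le> (real m)^2 * (measure D {x. \<theta> \<le> x})^2"
proof -
  interpret V: prob_space voter_space by (rule prob_space_voter_space)
  define q where "q = measure D {x. \<theta> \<le> x}"
  define pairs where "pairs = {(k, k'). k \<in> {1..m} \<and> k' \<in> {1..m} \<and> k \<noteq> k'}"
  define R where "R = (\<lambda>(k, k'). PiE {1..m} (\<lambda>j. if j = k \<or> j = k' then {x. \<theta> \<le> x} else UNIV))"
  have pairs_sub: "pairs \<subseteq> {1..m} \<times> {1..m}" by (auto simp: pairs_def)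
  then have "finite pairs" by (rule finite_subset) simp
  have "{x. \<theta> \<le> x} \<in> sets borel" by measurable
  then have "R (k, k') \<in> sets voter_space" for k k'
    unfolding R_def prod.case by (intro sets_voter_space_PiE) simp
  then have R_sets [measurable]: "R kk \<in> sets voter_space" for kk
    by (cases kk) simp
  have cover: "{y\<in>space voter_space. 2 \<le> count_ge m \<theta> y} \<subseteq> (\<Union>kk\<in>pairs. R kk)"
  proof
    fix y assume y: "y \<in> {y\<in>space voter_space. 2 \<le> count_ge m \<theta> y}"
    then obtain k k' where "k \<in> {1..m}" "k' \<in> {1..m}" "k \<noteq> k'" "\<theta> \<le> y k" "\<theta> \<le> y k'"
      by (auto elim: count_ge_at_least_2E)
    moreover have "y \<in> extensional {1..m}" using y by (auto simp: space_voter_space PiE_def)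
    ultimately have "y \<in> R (k, k')" "(k, k') \<in> pairs" by (auto simp: R_def pairs_def PiE_def)
    then show "y \<in> (\<Union>kk\<in>pairs. R kk)" by blast
  qed
  have measure_R: "measure voter_space (R kk) = q^2" if kk_pairs: "kk \<in> pairs" for kk
  proof -
    obtain k k' where kk: "kk = (k, k')" "k \<in> {1..m}" "k' \<in> {1..m}" "k \<noteq> k'"
      using kk_pairs by (auto simp: pairs_def)
    have "measure voter_space (R kk) = (\<Prod>j\<in>{1..m}. if j = k \<or> j = k' then q else 1)"
      unfolding kk R_def prod.case using prob_space.prob_space[OF prob_space_D]
      by (subst measure_voter_space_PiE) (auto simp: q_def intro!: prod.cong)
    also have "\<dots> = (\<Prod>j\<in>{1..m} \<inter> {j. j = k \<or> j = k'}. q)"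
      by (subst prod.If_cases) auto
    also have "{1..m} \<inter> {j. j = k \<or> j = k'} = {k, k'}" using kk by auto
    finally show ?thesis using kk by (simp add: power2_eq_square)
  qed
  have "measure voter_space {y\<in>space voter_space. 2 \<le> count_ge m \<theta> y} \<le> measure voter_space (\<Union>kk\<in>pairs. R kk)"
    using cover \<open>finite pairs\<close> by (intro V.finite_measure_mono) auto
  also have "\<dots> \<le> (\<Sum>kk\<in>pairs. measure voter_space (R kk))"
    using \<open>finite pairs\<close> by (intro V.finite_measure_subadditive_finite) auto
  also have "\<dots> = real (card pairs) * q^2" using measure_R by simp
  also have "\<dots> \<le> (real m)^2 * q^2"
    using card_mono[OF _ pairs_sub] by (intro mult_right_mono) (auto simp: power2_eq_square simp flip: of_nat_mult)
  finally show ?thesis by (simp add: q_def)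
qed

lemma prob_count_ge_less_2_le:
  fixes \<theta> :: real
  defines "q \<equiv> measure D {x. x < \<theta>}"
  shows "measure voter_space {y\<in>space voter_space. count_ge m \<theta> y < 2} \<le> q^m + real m * (1 - q) * q^(m - 1)"
proof -
  interpret V: prob_space voter_space by (rule prob_space_voter_space)
  define Q0 where "Q0 = PiE {1..m} (\<lambda>_. {x. x < \<theta>})"
  define Q1 where "Q1 = (\<lambda>k. PiE {1..m} (\<lambda>j. if j = k then {x. \<theta> \<le> x} else {x. x < \<theta>}))"
  have Q_sets [measurable]: "Q0 \<in> sets voter_space" "Q1 k \<in> sets voter_space" for k
    unfolding Q0_def Q1_def by (intro sets_voter_space_PiE; auto)+
  have cover: "{y\<in>space voter_space. count_ge m \<theta> y < 2} \<subseteq> Q0 \<union> (\<Union>k\<in>{1..m}. Q1 k)"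
  proof
    fix y assume y: "y \<in> {y\<in>space voter_space. count_ge m \<theta> y < 2}"
    have y_ext: "y \<in> extensional {1..m}" using y by (auto simp: space_voter_space PiE_def)
    from y have "count_ge m \<theta> y < 2" by simp
    then show "y \<in> Q0 \<union> (\<Union>k\<in>{1..m}. Q1 k)"
    proof (cases rule: count_ge_less_2E)
      case 1
      then have "y \<in> Q0" using y_ext by (auto simp: Q0_def PiE_def Pi_def)
      then show ?thesis by blast
    next
      case (2 k)
      then have "y \<in> Q1 k" using y_ext by (auto simp: Q1_def PiE_def Pi_def)
      with \<open>k \<in> {1..m}\<close> show ?thesis by blast
    qed
  qed
  have "UNIV - {x. x < \<theta>} = {x. \<theta> \<le> x}" by auto
  then have "measure D {x. \<theta> \<le> x} = 1 - q"
    using prob_space.prob_compl[OF prob_space_D, of "{x. x < \<theta>}"] by (simp add: q_def)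
  then have "measure voter_space (Q1 k) = (\<Prod>j\<in>{1..m}. if j = k then 1 - q else q)" for k
    unfolding Q1_def by (subst measure_voter_space_PiE) (auto simp: q_def intro!: prod.cong)
  then have Q1: "measure voter_space (Q1 k) = (1 - q) * q ^ (m - 1)" if "k \<in> {1..m}" for k
    using that by (simp add: prod.If_cases Int_absorb1 Diff_eq[symmetric] card_Diff_singleton)
  have "measure voter_space {y\<in>space voter_space. count_ge m \<theta> y < 2} \<le> measure voter_space (Q0 \<union> (\<Union>k\<in>{1..m}. Q1 k))"
    using cover by (intro V.finite_measure_mono) auto
  also have "\<dots> \<le> measure voter_space Q0 + measure voter_space (\<Union>k\<in>{1..m}. Q1 k)"
    using Q_sets by (intro measure_Un_le) auto
  also have "\<dots> \<le> measure voter_space Q0 + (\<Sum>k\<in>{1..m}. measure voter_space (Q1 k))"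
    using Q_sets by (intro add_left_mono V.finite_measure_subadditive_finite) auto
  also have "\<dots> = q^m + real m * (1 - q) * q^(m - 1)"
    unfolding Q0_def using Q1 by (subst measure_voter_space_PiE) (auto simp: q_def)
  finally show ?thesis .
qed

lemma util_eq_kth_largest_voter_sample:
  "util m \<sigma> x i j = kth_largest m (voter_sample i x) (pos m \<sigma> i j)"
  unfolding util_def by (intro kth_largest_cong) (simp add: voter_sample_def)

context
  fixes \<sigma> assumes \<sigma>: "is_profile n m \<sigma>"
begin

lemma measurable_util [measurable]:
  assumes "i \<in> {1..n}" "j \<in> {1..m}"
  shows "(\<lambda>x. util m \<sigma> x i j) \<in> borel_measurable (sample_space n m D)"
proof -
  have "1 \<le> pos m \<sigma> i j" "pos m \<sigma> i j \<le> m" using pos_mem[OF \<sigma> assms] by auto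
  from measurable_compose[OF measurable_voter_sample[OF assms(1)] measurable_kth_largest_voter_space[OF this]]
  show ?thesis by (simp add: util_eq_kth_largest_voter_sample)
qed

lemma measurable_sw [measurable]:
  "j \<in> {1..m} \<Longrightarrow> (\<lambda>x. sw n m \<sigma> x j) \<in> borel_measurable (sample_space n m D)"
  unfolding sw_def by (intro borel_measurable_sum measurable_util) auto

lemma measurable_max_sw [measurable]:
  "(\<lambda>x. max_sw n m \<sigma> x) \<in> borel_measurable (sample_space n m D)"
  unfolding max_sw_def by (intro borel_measurable_Max measurable_sw) auto

lemma measurable_dist_alt [measurable]:
  "j \<in> {1..m} \<Longrightarrow> (\<lambda>x. dist_alt n m \<sigma> x j) \<in> borel_measurable (sample_space n m D)"
  unfolding dist_alt_def by (intro borel_measurable_divide measurable_sw measurable_max_sw)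

lemma AE_util_values:
  assumes "AE x in D. x \<in> V"
  shows "AE x in sample_space n m D. \<forall>i\<in>{1..n}. \<forall>j\<in>{1..m}. util m \<sigma> x i j \<in> V"
  using AE_sample_space_values[OF assms]
proof eventually_elim
  case (elim x)
  show ?case
  proof (intro ballI)
    fix i j assume ij: "i \<in> {1..n}" "j \<in> {1..m}"
    from util_mem_samples[OF \<sigma> ij] obtain k where "k \<in> {1..m}" "util m \<sigma> x i j = x (i, k)"
      by blast
    with elim ij(1) show "util m \<sigma> x i j \<in> V" by simp
  qed
qed

lemma AE_dist_alt_unit:
  "AE x in sample_space n m D. \<forall>j\<in>{1..m}. dist_alt n m \<sigma> x j \<in> {0..1}"
  using AE_util_values[OF AE_D_unit]
proof eventually_elim
  case (elim x)
  then have "0 \<le> sw n m \<sigma> x j" if "j \<in> {1..m}" for j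
    using that by (auto simp: sw_def intro: sum_nonneg)
  then show ?case using dist_alt_bounds by auto
qed

lemma integrable_util:
  assumes "i \<in> {1..n}" "j \<in> {1..m}"
  shows "integrable (sample_space n m D) (\<lambda>x. util m \<sigma> x i j)"
proof (intro finite_measure.integrable_const_bound[where B=1] prob_space.finite_measure prob_space_sample_space)
  show "AE x in sample_space n m D. norm (util m \<sigma> x i j) \<le> 1"
    using AE_util_values[OF AE_D_unit] by eventually_elim (use assms in auto)
qed (use assms in measurable)

lemma integrable_dist_alt:
  assumes "j \<in> {1..m}"
  shows "integrable (sample_space n m D) (\<lambda>x. dist_alt n m \<sigma> x j)"
proof (intro finite_measure.integrable_const_bound[where B=1] prob_space.finite_measure prob_space_sample_space)
  show "AE x in sample_space n m D. norm (dist_alt n m \<sigma> x j) \<le> 1"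
    using AE_dist_alt_unit by eventually_elim (use assms in auto)
qed (use assms in measurable)

lemma exp_sw_eq_sum:
  assumes "j \<in> {1..m}"
  shows "exp_sw n m D \<sigma> j = (\<Sum>i\<in>{1..n}. \<integral>y. kth_largest m y (pos m \<sigma> i j) \<partial>voter_space)"
proof -
  have "exp_sw n m D \<sigma> j = (\<Sum>i\<in>{1..n}. \<integral>x. util m \<sigma> x i j \<partial>sample_space n m D)"
    unfolding exp_sw_def sw_def using assms
    by (intro Bochner_Integration.integral_sum integrable_util) auto
  also have "\<dots> = (\<Sum>i\<in>{1..n}. \<integral>y. kth_largest m y (pos m \<sigma> i j) \<partial>voter_space)"
  proof (intro sum.cong refl)
    fix i assume i: "i \<in> {1..n}"
    have "1 \<le> pos m \<sigma> i j" "pos m \<sigma> i j \<le> m" using pos_mem[OF \<sigma> i assms] by auto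
    from integral_voter_sample[OF i measurable_kth_largest_voter_space[OF this]]
    show "(\<integral>x. util m \<sigma> x i j \<partial>sample_space n m D) = (\<integral>y. kth_largest m y (pos m \<sigma> i j) \<partial>voter_space)"
      by (simp add: util_eq_kth_largest_voter_sample)
  qed
  finally show ?thesis .
qed

end

end

section \<open>The hard instance\<close>

lemma sum_mod_periodic:
  fixes g :: "nat \<Rightarrow> 'a::comm_semiring_1"
  assumes "N > 0"
  shows "(\<Sum>i\<in>{1..N*T}. g ((i - 1) mod N)) = of_nat T * (\<Sum>c<N. g c)"
proof (induction T)
  case 0 then show ?case by simp
next
  case (Suc T)
  have "{1..N * Suc T} = {1..N*T} \<union> {N*T+1..N*T+N}" by auto
  then have "(\<Sum>i\<in>{1..N * Suc T}. g ((i - 1) mod N))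
      = (\<Sum>i\<in>{1..N*T}. g ((i - 1) mod N)) + (\<Sum>i\<in>{N*T+1..N*T+N}. g ((i - 1) mod N))"
    by (simp add: sum.union_disjoint ivl_disj_int)
  also have "(\<Sum>i\<in>{N*T+1..N*T+N}. g ((i - 1) mod N)) = (\<Sum>c<N. g c)"
  proof -
    have "(\<Sum>c<N. g c) = (\<Sum>i\<in>(\<lambda>c. c + (N*T+1)) ` {0..<N}. g ((i - 1) mod N))"
      by (subst sum.reindex) (auto simp: atLeast0LessThan inj_on_def)
    also have "(\<lambda>c. c + (N*T+1)) ` {0..<N} = {N*T+1..N*T+N}"
      by (simp only: image_add_atLeastLessThan') auto
    finally show ?thesis ..
  qed
  finally show ?case using Suc by (simp add: algebra_simps)
qed

locale hard_instance =
  fixes m :: nat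
  assumes m_ge_5: "5 \<le> m"
begin

definition class_size :: nat where "class_size = m^3"
definition n_voters :: nat where "n_voters = (m - 1) * class_size"
definition prob_top :: real where "prob_top = 1 / (real n_voters * (real m)^2)"
definition val_mid :: real where "val_mid = prob_top / (4 * real m)"
definition val_low :: real where "val_low = val_mid / real m"
definition prob_mid :: real where "prob_mid = 4 / real m"

definition hard_pmf :: "real pmf" where
  "hard_pmf = pmf_of_list [(val_low, 1 - prob_mid - prob_top), (val_mid, prob_mid), (1, prob_top)]"

definition hard_distr :: "real measure" where
  "hard_distr = distr (measure_pmf hard_pmf) borel (\<lambda>x. x)"

lemma m_real_ge_5: "real m \<ge> 5"
  using m_ge_5 by simp

lemma class_size_ge: "class_size \<ge> 125"
  unfolding class_size_def using power_mono[OF m_ge_5, of 3] by simp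

lemma n_voters_eq: "real n_voters = (real m - 1) * real class_size"
  unfolding n_voters_def using m_ge_5 by (simp add: of_nat_diff)

lemma n_voters_le: "real n_voters \<le> real m * real class_size"
  unfolding n_voters_eq by (simp add: mult_right_mono)

lemma n_voters_ge: "real n_voters \<ge> 4 * real class_size"
  unfolding n_voters_eq using m_real_ge_5 by (intro mult_right_mono) auto

lemma n_voters_pos: "n_voters > 0"
  using n_voters_ge class_size_ge by linarith

lemma prob_top_pos: "prob_top > 0"
  unfolding prob_top_def using n_voters_pos m_ge_5 by simp

lemma n_voters_m_prob_top: "real n_voters * real m * prob_top = 1 / real m"
  unfolding prob_top_def using n_voters_pos m_ge_5 by (simp add: power2_eq_square)

lemma m_prob_top_le: "real m * prob_top \<le> 1 / 100"
proof -
  have "100 \<le> real n_voters" using n_voters_ge class_size_ge by linarith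
  also have "\<dots> \<le> real n_voters * real m"
    using mult_left_mono[of 1 "real m" "real n_voters"] m_real_ge_5 by simp
  finally have "real m * 100 \<le> real n_voters * (real m)^2"
    using m_real_ge_5 by (simp add: power2_eq_square)
  then show ?thesis unfolding prob_top_def using n_voters_pos m_ge_5 by (simp add: field_simps)
qed

lemma prob_top_le: "prob_top \<le> 1 / 100"
proof -
  have "1 * prob_top \<le> real m * prob_top"
    using prob_top_pos m_real_ge_5 by (intro mult_right_mono) auto
  then show ?thesis using m_prob_top_le by simp
qed

lemma val_mid_pos: "val_mid > 0"
  unfolding val_mid_def using prob_top_pos m_ge_5 by simp

lemma val_low_pos: "val_low > 0"
  unfolding val_low_def using val_mid_pos m_ge_5 by simp

lemma val_low_less_mid: "val_low < val_mid"
  unfolding val_low_def using val_mid_pos m_real_ge_5 by (simp add: field_simps)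

lemma val_mid_less_1: "val_mid < 1"
  unfolding val_mid_def using prob_top_pos prob_top_le m_real_ge_5 by (simp add: field_simps)

lemma prob_mid_bounds: "0 < prob_mid" "prob_mid \<le> 4 / 5"
  unfolding prob_mid_def using m_real_ge_5 by (auto simp: field_simps)

lemma hard_pmf_wf: "pmf_of_list_wf [(val_low, 1 - prob_mid - prob_top), (val_mid, prob_mid), (1, prob_top)]"
  using prob_mid_bounds prob_top_le prob_top_pos by (intro pmf_of_list_wfI) auto

lemma measure_hard_distr:
  assumes "A \<in> sets borel"
  shows "measure hard_distr A = sum_list (map snd (filter (\<lambda>x. fst x \<in> A)
    [(val_low, 1 - prob_mid - prob_top), (val_mid, prob_mid), (1, prob_top)]))"
  using assms measure_pmf_of_list[OF hard_pmf_wf]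
  by (simp add: hard_distr_def hard_pmf_def measure_distr)

lemma measure_hard_distr_ge_1: "measure hard_distr {x. 1 \<le> x} = prob_top"
  using val_low_less_mid val_mid_less_1 by (subst measure_hard_distr) auto

lemma measure_hard_distr_ge_mid: "measure hard_distr {x. val_mid \<le> x} = prob_mid + prob_top"
  using val_low_less_mid val_mid_less_1 by (subst measure_hard_distr) auto

lemma measure_hard_distr_less_mid: "measure hard_distr {x. x < val_mid} = 1 - prob_mid - prob_top"
  using val_low_less_mid val_mid_less_1 by (subst measure_hard_distr) auto

lemma measure_hard_distr_not_low_mid: "measure hard_distr (- {val_low, val_mid}) = prob_top"
  using val_low_less_mid val_mid_less_1 by (subst measure_hard_distr) auto

lemma distr_on_unit_hard_distr: "distr_on_unit hard_distr"
proof -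
  have "prob_space hard_distr"
    unfolding hard_distr_def by (intro prob_space.prob_space_distr measure_pmf.prob_space_axioms) simp
  moreover have "measure hard_distr {0..1} = 1"
    using val_low_less_mid val_mid_less_1 val_low_pos by (subst measure_hard_distr) auto
  ultimately show ?thesis by (simp add: distr_on_unit_def hard_distr_def)
qed

lemma AE_hard_distr: "AE x in hard_distr. x \<in> {val_low, val_mid, 1}"
proof -
  have "AE x in measure_pmf hard_pmf. x \<in> {val_low, val_mid, 1}"
    by (rule AE_pmfI) (use set_pmf_of_list[OF hard_pmf_wf] in \<open>auto simp: hard_pmf_def\<close>)
  then show ?thesis unfolding hard_distr_def by (subst AE_distr_iff) auto
qed

sublocale unit_voters n_voters m hard_distr
  by unfold_locales (rule distr_on_unit_hard_distr)

definition voter_class :: "nat \<Rightarrow> nat" where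
  "voter_class i = (i - 1) mod (m - 1)"

definition cyclic_ranking :: "nat \<Rightarrow> nat \<Rightarrow> nat" where
  "cyclic_ranking c p = (if p = 1 then c + 2 else if p = 2 then 1
     else if c + p \<le> m then c + p else c + p + 1 - m)"

definition hard_profile :: "nat \<Rightarrow> nat \<Rightarrow> nat" where
  "hard_profile i = cyclic_ranking (voter_class i)"

lemma voter_class_less: "voter_class i < m - 1"
  unfolding voter_class_def using m_ge_5 by simp

lemma bij_cyclic_ranking:
  assumes "c < m - 1"
  shows "bij_betw (cyclic_ranking c) {1..m} {1..m}"
proof -
  have "inj_on (cyclic_ranking c) {1..m}"
    using assms unfolding inj_on_def cyclic_ranking_def by (auto split: if_splits)
  moreover have "cyclic_ranking c ` {1..m} \<subseteq> {1..m}"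
    using assms unfolding cyclic_ranking_def by auto
  ultimately show ?thesis
    unfolding bij_betw_def using endo_inj_surj[of "{1..m}"] by auto
qed

lemma is_profile_hard_profile: "is_profile n_voters m hard_profile"
  unfolding is_profile_def hard_profile_def using bij_cyclic_ranking voter_class_less by auto

lemma pos_hard_profile: "pos m hard_profile i = the_inv_into {1..m} (cyclic_ranking (voter_class i))"
  by (simp add: pos_def hard_profile_def fun_eq_iff)

lemma pos_hard_profile_1: "pos m hard_profile i 1 = 2"
  unfolding pos_hard_profile using bij_cyclic_ranking[OF voter_class_less] m_ge_5
  by (intro the_inv_into_f_eq) (auto simp: cyclic_ranking_def bij_betw_def)

lemma pos_hard_profile_favourite: "pos m hard_profile i (voter_class i + 2) = 1"
  unfolding pos_hard_profile using bij_cyclic_ranking[OF voter_class_less] m_ge_5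
  by (intro the_inv_into_f_eq) (auto simp: cyclic_ranking_def bij_betw_def)

lemma inj_on_pos_cyclic_ranking:
  assumes "j \<in> {2..m}"
  shows "inj_on (\<lambda>c. the_inv_into {1..m} (cyclic_ranking c) j) {..<m - 1}"
proof (rule inj_onI)
  fix c c' assume "c \<in> {..<m - 1}" "c' \<in> {..<m - 1}"
    and eq: "the_inv_into {1..m} (cyclic_ranking c) j = the_inv_into {1..m} (cyclic_ranking c') j"
  have inverse: "cyclic_ranking d (the_inv_into {1..m} (cyclic_ranking d) j) = j" if "d < m - 1" for d
    using bij_cyclic_ranking[OF that] assms by (intro f_the_inv_into_f) (auto simp: bij_betw_def)
  define p where "p = the_inv_into {1..m} (cyclic_ranking c) j"
  have "cyclic_ranking c p = j" unfolding p_def using inverse \<open>c \<in> _\<close> by simp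
  moreover have "cyclic_ranking c' p = j" unfolding p_def eq using inverse \<open>c' \<in> _\<close> by simp
  ultimately show "c = c'"
    using assms \<open>c \<in> _\<close> \<open>c' \<in> _\<close> unfolding cyclic_ranking_def by (auto split: if_splits)
qed

lemma sum_voter_class:
  "(\<Sum>i\<in>{1..n_voters}. g (voter_class i)) = real class_size * (\<Sum>c<m - 1. g c)"
  unfolding n_voters_def voter_class_def using m_ge_5 by (intro sum_mod_periodic) auto

lemma integral_kth_largest_1_ge: "prob_top \<le> (\<integral>y. kth_largest m y 1 \<partial>voter_space)"
proof -
  interpret V: prob_space voter_space by (rule prob_space_voter_space)
  have m: "1 \<le> m" "(1::nat) \<in> {1..m}" using m_ge_5 by auto
  have "prob_top = measure voter_space {y\<in>space voter_space. y 1 \<in> {x. 1 \<le> x}}"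
    using m by (subst measure_voter_space_component) (auto simp: measure_hard_distr_ge_1)
  also have "\<dots> = (\<integral>y. of_bool (1 \<le> y 1) \<partial>voter_space)"
    using m by (subst V.integral_of_bool) auto
  also have "\<dots> \<le> (\<integral>y. kth_largest m y 1 \<partial>voter_space)"
  proof (intro integral_mono_AE V.integrable_of_bool integrable_kth_largest)
    show "AE y in voter_space. of_bool (1 \<le> y 1) \<le> kth_largest m y 1"
      using kth_largest_voter_space_unit[OF order.refl m(1)]
    proof eventually_elim
      case (elim y)
      show ?case
        using elim kth_largest_1_ge[OF m(2), of y] by (cases "1 \<le> y 1") auto
    qed
  qed (use m in measurable)
  finally show ?thesis .
qed

lemma integral_kth_largest_2_le:
  "(\<integral>y. kth_largest m y 2 \<partial>voter_space) \<le> val_mid + (real m)^2 * prob_top^2"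
proof -
  interpret V: prob_space voter_space by (rule prob_space_voter_space)
  have m: "1 \<le> (2::nat)" "2 \<le> m" using m_ge_5 by auto
  have "(\<integral>y. kth_largest m y 2 \<partial>voter_space) \<le> (\<integral>y. val_mid + of_bool (2 \<le> count_ge m 1 y) \<partial>voter_space)"
  proof (intro integral_mono_AE integrable_kth_largest Bochner_Integration.integrable_add V.integrable_of_bool)
    show "AE y in voter_space. kth_largest m y 2 \<le> val_mid + of_bool (2 \<le> count_ge m 1 y)"
      using AE_voter_space_values[OF AE_hard_distr]
    proof eventually_elim
      case (elim y)
      then have "kth_largest m y 2 \<in> {val_low, val_mid, 1}"
        using kth_largest_in[OF m, of y] by blast
      moreover have "kth_largest m y 2 = 1 \<Longrightarrow> 2 \<le> count_ge m 1 y"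
        using kth_largest_ge_iff[OF m, of 1 y] by simp
      ultimately show ?case using val_low_less_mid val_mid_pos by auto
    qed
  qed (use m in measurable)
  also have "\<dots> = val_mid + measure voter_space {y\<in>space voter_space. 2 \<le> count_ge m 1 y}"
    by (subst Bochner_Integration.integral_add) (auto simp: V.integral_of_bool V.prob_space)
  also have "\<dots> \<le> val_mid + (real m)^2 * prob_top^2"
    using prob_count_ge_2_le[of 1] by (simp add: measure_hard_distr_ge_1)
  finally show ?thesis .
qed

lemma exp_sw_1_le:
  "exp_sw n_voters m hard_distr hard_profile 1 \<le> real n_voters * (val_mid + (real m)^2 * prob_top^2)"
proof -
  have "exp_sw n_voters m hard_distr hard_profile 1
      = (\<Sum>i\<in>{1..n_voters}. \<integral>y. kth_largest m y (pos m hard_profile i 1) \<partial>voter_space)"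
    by (rule exp_sw_eq_sum[OF is_profile_hard_profile]) (use m_ge_5 in simp)
  also have "\<dots> = (\<Sum>i\<in>{1..n_voters}. \<integral>y. kth_largest m y 2 \<partial>voter_space)"
    by (simp only: pos_hard_profile_1)
  also have "\<dots> \<le> (\<Sum>i\<in>{1..n_voters}. val_mid + (real m)^2 * prob_top^2)"
    by (intro sum_mono integral_kth_largest_2_le)
  finally show ?thesis by simp
qed

lemma exp_sw_2_ge: "real class_size * prob_top \<le> exp_sw n_voters m hard_distr hard_profile 2"
proof -
  have "real class_size * prob_top = (\<Sum>i\<in>{1..n_voters}. if voter_class i = 0 then prob_top else 0)"
    using m_ge_5 by (subst sum_voter_class) (simp add: lessThan_nat_numeral)
  also have "\<dots> \<le> (\<Sum>i\<in>{1..n_voters}. \<integral>y. kth_largest m y (pos m hard_profile i 2) \<partial>voter_space)"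
  proof (intro sum_mono)
    fix i assume i: "i \<in> {1..n_voters}"
    have "pos m hard_profile i 2 \<in> {1..m}"
      using pos_mem[OF is_profile_hard_profile i] m_ge_5 by simp
    moreover have "pos m hard_profile i 2 = 1" if "voter_class i = 0"
      using pos_hard_profile_favourite[of i] by (simp only: that add_0)
    ultimately show "(if voter_class i = 0 then prob_top else 0)
        \<le> (\<integral>y. kth_largest m y (pos m hard_profile i 2) \<partial>voter_space)"
      using integral_kth_largest_1_ge integral_kth_largest_nonneg by auto
  qed
  also have "\<dots> = exp_sw n_voters m hard_distr hard_profile 2"
    by (rule exp_sw_eq_sum[OF is_profile_hard_profile, symmetric]) (use m_ge_5 in simp)
  finally show ?thesis .
qed

lemma exp_sw_1_less_2:
  "exp_sw n_voters m hard_distr hard_profile 1 < exp_sw n_voters m hard_distr hard_profile 2"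
proof -
  have "real n_voters * val_mid \<le> real class_size * prob_top / 4"
    using n_voters_le prob_top_pos m_real_ge_5 unfolding val_mid_def
    by (simp add: field_simps mult_right_mono)
  moreover have "real n_voters * ((real m)^2 * prob_top^2) = prob_top"
    unfolding prob_top_def using n_voters_pos m_ge_5 by (simp add: power2_eq_square)
  moreover have "4 * prob_top < real class_size * prob_top"
    using class_size_ge prob_top_pos by simp
  ultimately have "real n_voters * (val_mid + (real m)^2 * prob_top^2) < real class_size * prob_top"
    using prob_top_pos unfolding distrib_left by linarith
  then show ?thesis using exp_sw_1_le exp_sw_2_ge by linarith
qed

lemma ewm_rule_avoids_1:
  assumes "ewm_rule n_voters m hard_distr f"
  shows "f hard_profile \<in> {2..m}"
proof -
  have "f hard_profile \<in> {1..m}"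
    and "exp_sw n_voters m hard_distr hard_profile 2 \<le> exp_sw n_voters m hard_distr hard_profile (f hard_profile)"
    using assms is_profile_hard_profile m_ge_5 unfolding ewm_rule_def by auto
  with exp_sw_1_less_2 show ?thesis by (cases "f hard_profile = 1") auto
qed

subsection \<open>Typical samples\<close>

definition n_mid_at :: "nat \<Rightarrow> (nat \<times> nat \<Rightarrow> real) \<Rightarrow> real" where
  "n_mid_at j x = (\<Sum>i\<in>{1..n_voters}. of_bool (pos m hard_profile i j \<le> count_ge m val_mid (voter_sample i x)))"

definition typical :: "(nat \<times> nat \<Rightarrow> real) \<Rightarrow> bool" where
  "typical x \<longleftrightarrow> (\<forall>i\<in>{1..n_voters}. \<forall>k\<in>{1..m}. x (i, k) \<in> {val_low, val_mid})
     \<and> real n_voters / 4 \<le> n_mid_at 1 x \<and> (\<forall>j\<in>{2..m}. n_mid_at j x < 6 * real class_size)"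

lemma measurable_n_mid_at [measurable]:
  "n_mid_at j \<in> borel_measurable (sample_space n_voters m hard_distr)"
  unfolding n_mid_at_def[abs_def] by measurable

lemma measurable_typical [measurable]: "Measurable.pred (sample_space n_voters m hard_distr) typical"
  unfolding typical_def[abs_def] by measurable

lemma pow_prob_below_mid_le: "(1 - prob_mid - prob_top) ^ (m - 1) \<le> 1 / 12"
proof -
  define q where "q = 1 - prob_mid - prob_top"
  have "0 \<le> q" "q \<le> exp (- (4 / real m))"
    using prob_mid_bounds prob_top_le prob_top_pos exp_ge_add_one_self[of "- (4 / real m)"]
    by (auto simp: q_def prob_mid_def)
  then have "q ^ (m - 1) \<le> exp (- (4 / real m)) ^ (m - 1)" by (intro power_mono)
  also have "\<dots> = exp (- (real (m - 1) * (4 / real m)))" by (simp flip: exp_of_nat_mult)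
  also have "\<dots> \<le> exp (- (16 / 5))"
  proof -
    have "real (m - 1) * (4 / real m) = 4 - 4 / real m"
      using m_ge_5 by (simp add: of_nat_diff field_simps)
    moreover have "4 / real m \<le> 4 / 5" using m_real_ge_5 by (simp add: field_simps)
    ultimately have "- (real (m - 1) * (4 / real m)) \<le> - (16 / 5)" by linarith
    then show ?thesis by (simp only: exp_le_cancel_iff)
  qed
  also have "\<dots> \<le> 1 / 12"
  proof -
    have "(12::real) \<le> (1 + 8/5 + (8/5)^2/2) ^ 2" by (simp add: power2_eq_square)
    also have "\<dots> \<le> exp (8/5) ^ 2" by (intro power_mono exp_lower_Taylor_quadratic) auto
    also have "\<dots> = exp (16/5)" by (simp flip: exp_of_nat_mult)
    finally show ?thesis by (simp add: exp_minus field_simps)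
  qed
  finally show ?thesis by (simp add: q_def)
qed

lemma prob_two_mid_ge_half:
  "1 / 2 \<le> measure voter_space {y\<in>space voter_space. 2 \<le> count_ge m val_mid y}"
proof -
  interpret V: prob_space voter_space by (rule prob_space_voter_space)
  define q where "q = 1 - prob_mid - prob_top"
  have "0 \<le> q" "q \<le> 1" using prob_mid_bounds prob_top_le prob_top_pos by (auto simp: q_def)
  have "measure voter_space {y\<in>space voter_space. count_ge m val_mid y < 2} \<le> q^m + real m * (1 - q) * q^(m - 1)"
    using prob_count_ge_less_2_le[of val_mid] by (simp add: measure_hard_distr_less_mid q_def)
  also have "\<dots> \<le> q^(m - 1) + 5 * q^(m - 1)"
  proof (intro add_mono mult_right_mono)
    show "q^m \<le> q^(m - 1)" using \<open>0 \<le> q\<close> \<open>q \<le> 1\<close> m_ge_5 by (intro power_decreasing) auto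
    show "real m * (1 - q) \<le> 5"
      using m_prob_top_le m_real_ge_5 by (simp add: q_def prob_mid_def field_simps)
  qed (use \<open>0 \<le> q\<close> in simp)
  also have "\<dots> \<le> 1 / 2" using pow_prob_below_mid_le by (simp add: q_def)
  finally have "measure voter_space {y\<in>space voter_space. count_ge m val_mid y < 2} \<le> 1 / 2" .
  moreover have "{y\<in>space voter_space. count_ge m val_mid y < 2}
      = space voter_space - {y\<in>space voter_space. 2 \<le> count_ge m val_mid y}" by auto
  moreover have "measure voter_space (space voter_space - {y\<in>space voter_space. 2 \<le> count_ge m val_mid y})
      = 1 - measure voter_space {y\<in>space voter_space. 2 \<le> count_ge m val_mid y}"
    by (intro V.prob_compl) measurable
  ultimately show ?thesis by simp
qed

lemma prob_not_low_mid:
  "measure (sample_space n_voters m hard_distr)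
     {x\<in>space (sample_space n_voters m hard_distr). \<exists>i\<in>{1..n_voters}. \<exists>k\<in>{1..m}. x (i, k) \<notin> {val_low, val_mid}}
   \<le> 1 / real m"
proof -
  interpret prob_space "sample_space n_voters m hard_distr" by (rule prob_space_sample_space)
  define E where "E c = {x\<in>space (sample_space n_voters m hard_distr). x c \<in> - {val_low, val_mid}}" for c
  have E: "E (i, k) \<in> events" "prob (E (i, k)) = prob_top"
    if "i \<in> {1..n_voters}" "k \<in> {1..m}" for i k
  proof -
    have "- {val_low, val_mid} \<in> sets borel" by auto
    from pred_sets2[OF this measurable_sample_component[OF that]]
    show "E (i, k) \<in> events" unfolding E_def pred_def .
    show "prob (E (i, k)) = prob_top"
      unfolding E_def using measure_sample_space_component[OF that \<open>- {val_low, val_mid} \<in> sets borel\<close>]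
      by (simp only: measure_hard_distr_not_low_mid)
  qed
  have "{x\<in>space (sample_space n_voters m hard_distr). \<exists>i\<in>{1..n_voters}. \<exists>k\<in>{1..m}. x (i, k) \<notin> {val_low, val_mid}}
      = (\<Union>c\<in>{1..n_voters} \<times> {1..m}. E c)" by (auto simp: E_def)
  also have "prob \<dots> \<le> (\<Sum>c\<in>{1..n_voters} \<times> {1..m}. prob (E c))"
    using E(1) by (intro finite_measure_subadditive_finite) auto
  also have "\<dots> = (\<Sum>c\<in>{1..n_voters} \<times> {1..m}. prob_top)"
    using E(2) by (intro sum.cong) auto
  also have "\<dots> = 1 / real m" using n_voters_m_prob_top by simp
  finally show ?thesis .
qed

lemma prob_few_mid_at_1:
  "measure (sample_space n_voters m hard_distr)
     {x\<in>space (sample_space n_voters m hard_distr). n_mid_at 1 x < real n_voters / 4} \<le> 1 / real m"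
proof -
  interpret prob_space "sample_space n_voters m hard_distr" by (rule prob_space_sample_space)
  define \<mu> where "\<mu> = (\<Sum>i\<in>{1..n_voters}. measure voter_space {y\<in>space voter_space. 2 \<le> count_ge m val_mid y})"
  have "real n_voters / 2 \<le> \<mu>"
    using sum_mono[of "{1..n_voters}" "\<lambda>_. 1 / 2", OF prob_two_mid_ge_half] by (simp add: \<mu>_def)
  then have "prob {x\<in>space (sample_space n_voters m hard_distr). n_mid_at 1 x < real n_voters / 4}
      \<le> prob {x\<in>space (sample_space n_voters m hard_distr). n_mid_at 1 x \<le> \<mu> - real n_voters / 4}"
    by (intro finite_measure_mono) auto
  also have "\<dots> \<le> exp (-2 * (real n_voters / 4)^2 / real n_voters)"
    unfolding n_mid_at_def pos_hard_profile_1 \<mu>_def using n_voters_pos by (intro hoeffding_voter_count(1)) auto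
  also have "\<dots> \<le> 1 / real m"
  proof -
    have "25 \<le> real m * real m" using mult_mono[OF m_real_ge_5 m_real_ge_5] by simp
    then have "real m * 2 \<le> real m * (real m * real m)" by (intro mult_left_mono) auto
    then have "real m \<le> 1 + real n_voters / 8"
      using n_voters_ge unfolding class_size_def by (simp add: power3_eq_cube)
    also have "\<dots> \<le> exp (real n_voters / 8)" by (rule exp_ge_add_one_self)
    finally have "real m \<le> exp (real n_voters / 8)" .
    have "-2 * (real n_voters / 4)^2 / real n_voters = - (real n_voters / 8)"
      using n_voters_pos by (simp add: power2_eq_square field_simps)
    then have "exp (-2 * (real n_voters / 4)^2 / real n_voters) = inverse (exp (real n_voters / 8))"
      by (simp only: exp_minus)
    also have "\<dots> \<le> inverse (real m)"
      using \<open>real m \<le> exp (real n_voters / 8)\<close> m_real_ge_5 by (intro le_imp_inverse_le) auto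
    finally show ?thesis by (simp only: inverse_eq_divide)
  qed
  finally show ?thesis .
qed

lemma expected_n_mid_at_le:
  assumes "j \<in> {2..m}"
  shows "(\<Sum>i\<in>{1..n_voters}. measure voter_space {y\<in>space voter_space. pos m hard_profile i j \<le> count_ge m val_mid y})
    \<le> 5 * real class_size"
proof -
  define \<phi> where "\<phi> p = measure voter_space {y\<in>space voter_space. p \<le> count_ge m val_mid y}" for p
  define h where "h c = the_inv_into {1..m} (cyclic_ranking c) j" for c
  txt \<open>Alternative \<open>j\<close> sits at a different position in each class, so the sum is at most
    \<open>t\<close> times the expected number of medium samples of a voter.\<close>
  have "(\<Sum>i\<in>{1..n_voters}. \<phi> (pos m hard_profile i j)) = real class_size * (\<Sum>c<m - 1. \<phi> (h c))"
    unfolding h_def pos_hard_profile by (rule sum_voter_class)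
  also have "(\<Sum>c<m - 1. \<phi> (h c)) = (\<Sum>p\<in>h ` {..<m - 1}. \<phi> p)"
    using inj_on_pos_cyclic_ranking[OF assms] by (simp add: sum.reindex h_def)
  also have "\<dots> \<le> (\<Sum>p\<in>{1..m}. \<phi> p)"
  proof (intro sum_mono2)
    show "h ` {..<m - 1} \<subseteq> {1..m}"
      using bij_cyclic_ranking assms unfolding h_def bij_betw_def by (auto intro: the_inv_into_into)
  qed (auto simp: \<phi>_def)
  also have "\<dots> = real m * (prob_mid + prob_top)"
    unfolding \<phi>_def sum_prob_count_ge measure_hard_distr_ge_mid ..
  also have "\<dots> \<le> 5" using m_prob_top_le m_real_ge_5 by (simp add: prob_mid_def field_simps)
  finally show ?thesis unfolding \<phi>_def by (simp add: mult_left_mono)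
qed

lemma prob_many_mid_at:
  assumes "j \<in> {2..m}"
  shows "measure (sample_space n_voters m hard_distr)
    {x\<in>space (sample_space n_voters m hard_distr). 6 * real class_size \<le> n_mid_at j x} \<le> 1 / (real m)^2"
proof -
  interpret prob_space "sample_space n_voters m hard_distr" by (rule prob_space_sample_space)
  define \<mu> where "\<mu> = (\<Sum>i\<in>{1..n_voters}.
    measure voter_space {y\<in>space voter_space. pos m hard_profile i j \<le> count_ge m val_mid y})"
  have "prob {x\<in>space (sample_space n_voters m hard_distr). 6 * real class_size \<le> n_mid_at j x}
      \<le> prob {x\<in>space (sample_space n_voters m hard_distr). \<mu> + real class_size \<le> n_mid_at j x}"
    using expected_n_mid_at_le[OF assms] unfolding \<mu>_def[symmetric] by (intro finite_measure_mono) auto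
  also have "\<dots> \<le> exp (-2 * (real class_size)^2 / real n_voters)"
    unfolding n_mid_at_def \<mu>_def using n_voters_pos by (intro hoeffding_voter_count(2)) auto
  also have "\<dots> \<le> 1 / (real m)^2"
  proof -
    have "(real m)^2 \<le> 2 * (real class_size)^2 / real n_voters"
      unfolding n_voters_eq class_size_def using m_real_ge_5
      by (simp add: power2_eq_square power3_eq_cube field_simps)
    also have "\<dots> \<le> exp (2 * (real class_size)^2 / real n_voters)"
      using exp_ge_add_one_self[of "2 * (real class_size)^2 / real n_voters"] by linarith
    finally show ?thesis using m_real_ge_5 by (simp add: exp_minus field_simps)
  qed
  finally show ?thesis .
qed

lemma val_mid_le_util_iff:
  assumes "i \<in> {1..n_voters}" "j \<in> {1..m}"
  shows "val_mid \<le> util m hard_profile x i j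
    \<longleftrightarrow> pos m hard_profile i j \<le> count_ge m val_mid (voter_sample i x)"
  using pos_mem[OF is_profile_hard_profile assms]
  by (simp add: util_eq_kth_largest_voter_sample kth_largest_ge_iff)

lemma util_typical:
  assumes "typical x" "i \<in> {1..n_voters}" "j \<in> {1..m}"
  shows "util m hard_profile x i j \<in> {val_low, val_mid}"
proof -
  obtain k where "k \<in> {1..m}" and "util m hard_profile x i j = x (i, k)"
    using util_mem_samples[OF is_profile_hard_profile assms(2,3), of x] by blast
  moreover have "x (i, k) \<in> {val_low, val_mid}"
    using assms(1,2) \<open>k \<in> {1..m}\<close> unfolding typical_def by blast
  ultimately show ?thesis by simp
qed

lemma util_typical_bounds:
  assumes "typical x" "i \<in> {1..n_voters}" "j \<in> {1..m}"
  defines "b \<equiv> of_bool (pos m hard_profile i j \<le> count_ge m val_mid (voter_sample i x))"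
  shows "val_mid * b \<le> util m hard_profile x i j" and "util m hard_profile x i j \<le> val_mid * b + val_low"
  using val_mid_le_util_iff[OF assms(2,3), of x] util_typical[OF assms(1-3)] val_low_pos val_low_less_mid
  unfolding b_def by auto

lemma sw_typical_bounds:
  assumes "typical x" "j \<in> {1..m}"
  shows "val_mid * n_mid_at j x \<le> sw n_voters m hard_profile x j"
    and "sw n_voters m hard_profile x j \<le> val_mid * n_mid_at j x + real n_voters * val_low"
proof -
  have "val_mid * n_mid_at j x
      = (\<Sum>i\<in>{1..n_voters}. val_mid * of_bool (pos m hard_profile i j \<le> count_ge m val_mid (voter_sample i x)))"
    by (simp add: n_mid_at_def sum_distrib_left)
  also have "\<dots> \<le> sw n_voters m hard_profile x j"
    unfolding sw_def using util_typical_bounds(1)[OF assms(1) _ assms(2)] by (intro sum_mono) simp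
  finally show "val_mid * n_mid_at j x \<le> sw n_voters m hard_profile x j" .
  have "sw n_voters m hard_profile x j \<le> (\<Sum>i\<in>{1..n_voters}.
      val_mid * of_bool (pos m hard_profile i j \<le> count_ge m val_mid (voter_sample i x)) + val_low)"
    unfolding sw_def using util_typical_bounds(2)[OF assms(1) _ assms(2)] by (intro sum_mono) simp
  also have "\<dots> = val_mid * n_mid_at j x + real n_voters * val_low"
    by (simp add: n_mid_at_def sum.distrib sum_distrib_left)
  finally show "sw n_voters m hard_profile x j \<le> val_mid * n_mid_at j x + real n_voters * val_low" .
qed

lemma sw_typical_nonneg:
  assumes "typical x" "j \<in> {1..m}"
  shows "0 \<le> sw n_voters m hard_profile x j"
  unfolding sw_def using util_typical[OF assms(1) _ assms(2)] val_low_pos val_mid_pos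
  by (intro sum_nonneg) force

lemma sw_1_typical_ge:
  assumes "typical x"
  shows "val_mid * real n_voters / 4 \<le> sw n_voters m hard_profile x 1"
proof -
  have "val_mid * real n_voters / 4 \<le> val_mid * n_mid_at 1 x"
    using assms val_mid_pos by (simp add: typical_def)
  also have "\<dots> \<le> sw n_voters m hard_profile x 1"
    using sw_typical_bounds(1)[OF assms] m_ge_5 by simp
  finally show ?thesis .
qed

lemma sw_typical_le:
  assumes "typical x" "j \<in> {2..m}"
  shows "sw n_voters m hard_profile x j \<le> 7 * real class_size * val_mid"
proof -
  have "n_mid_at j x \<le> 6 * real class_size"
    using assms by (auto simp: typical_def intro: less_imp_le)
  then have "val_mid * n_mid_at j x \<le> val_mid * (6 * real class_size)"
    using val_mid_pos by (intro mult_left_mono) auto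
  moreover have "real n_voters * val_low \<le> real class_size * val_mid"
    using n_voters_le val_low_pos m_real_ge_5 mult_right_mono[of "real n_voters" "real m * real class_size" val_low]
    by (simp add: val_low_def)
  moreover have "sw n_voters m hard_profile x j \<le> val_mid * n_mid_at j x + real n_voters * val_low"
    using sw_typical_bounds(2)[OF assms(1)] assms(2) by simp
  ultimately show ?thesis by (simp add: algebra_simps)
qed

lemma dist_alt_typical_le:
  assumes "typical x" "j \<in> {2..m}"
  shows "dist_alt n_voters m hard_profile x j \<le> 35 / real m"
proof -
  have one: "(1::nat) \<in> {1..m}" using m_ge_5 by simp
  have pos: "0 < val_mid * real n_voters / 4" using val_mid_pos n_voters_pos by simp
  have "val_mid * real n_voters / 4 \<le> max_sw n_voters m hard_profile x"
    using sw_1_typical_ge[OF assms(1)] sw_le_max_sw[OF one] by (rule order_trans)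
  then have "dist_alt n_voters m hard_profile x j \<le> sw n_voters m hard_profile x j / (val_mid * real n_voters / 4)"
    unfolding dist_alt_def using pos sw_typical_nonneg[OF assms(1)] assms(2)
    by (intro divide_left_mono) auto
  also have "\<dots> \<le> 7 * real class_size * val_mid / (val_mid * real n_voters / 4)"
    using sw_typical_le[OF assms] pos by (intro divide_right_mono) auto
  also have "\<dots> = 28 / (real m - 1)"
    unfolding n_voters_eq using val_mid_pos class_size_ge m_real_ge_5 by (simp add: field_simps)
  also have "\<dots> \<le> 35 / real m" using m_real_ge_5 by (simp add: field_simps)
  finally show ?thesis .
qed

lemma dist_alt_1_typical_ge:
  assumes "typical x"
  shows "1 / 8 \<le> dist_alt n_voters m hard_profile x 1"
proof -
  have one: "(1::nat) \<in> {1..m}" using m_ge_5 by simp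
  have "0 < val_mid * real n_voters / 4" using val_mid_pos n_voters_pos by simp
  then have sw_1: "0 < sw n_voters m hard_profile x 1" using sw_1_typical_ge[OF assms] by linarith
  have "real class_size * val_mid \<le> val_mid * real n_voters / 4"
    using n_voters_ge val_mid_pos by (simp add: field_simps)
  then have "max_sw n_voters m hard_profile x \<le> 8 * sw n_voters m hard_profile x 1"
    unfolding max_sw_def
  proof (intro Max.boundedI)
    fix s assume "s \<in> (\<lambda>k. sw n_voters m hard_profile x k) ` {1..m}"
    then obtain k where "k \<in> {1..m}" "s = sw n_voters m hard_profile x k" by auto
    then show "s \<le> 8 * sw n_voters m hard_profile x 1"
      using sw_typical_le[OF assms, of k] sw_1_typical_ge[OF assms] sw_1 \<open>_ \<le> val_mid * real n_voters / 4\<close>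
      by (cases "k = 1") auto
  qed (use one in auto)
  moreover have "0 < max_sw n_voters m hard_profile x"
    using sw_1 sw_le_max_sw[OF one, of n_voters hard_profile x] by linarith
  ultimately show ?thesis unfolding dist_alt_def by (simp add: le_divide_eq)
qed

lemma prob_not_typical:
  "measure (sample_space n_voters m hard_distr) {x\<in>space (sample_space n_voters m hard_distr). \<not> typical x}
    \<le> 3 / real m"
proof -
  interpret prob_space "sample_space n_voters m hard_distr" by (rule prob_space_sample_space)
  define A where "A = {x\<in>space (sample_space n_voters m hard_distr).
    \<exists>i\<in>{1..n_voters}. \<exists>k\<in>{1..m}. x (i, k) \<notin> {val_low, val_mid}}"
  define B where "B = {x\<in>space (sample_space n_voters m hard_distr). n_mid_at 1 x < real n_voters / 4}"
  define C where "C j = {x\<in>space (sample_space n_voters m hard_distr). 6 * real class_size \<le> n_mid_at j x}" for j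
  have [measurable]: "A \<in> events" "B \<in> events" "C j \<in> events" for j
    unfolding A_def B_def C_def by measurable
  have "{x\<in>space (sample_space n_voters m hard_distr). \<not> typical x} \<subseteq> A \<union> B \<union> (\<Union>j\<in>{2..m}. C j)"
    by (auto simp: typical_def A_def B_def C_def not_le not_less)
  then have "prob {x\<in>space (sample_space n_voters m hard_distr). \<not> typical x} \<le> prob (A \<union> B \<union> (\<Union>j\<in>{2..m}. C j))"
    by (intro finite_measure_mono) auto
  also have "\<dots> \<le> prob A + prob B + prob (\<Union>j\<in>{2..m}. C j)"
    by (intro order.trans[OF measure_Un_le] add_right_mono measure_Un_le) auto
  also have "\<dots> \<le> 1 / real m + 1 / real m + (\<Sum>j\<in>{2..m}. 1 / (real m)^2)"
  proof (intro add_mono order.trans[OF finite_measure_subadditive_finite] sum_mono)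
    show "prob A \<le> 1 / real m" unfolding A_def by (rule prob_not_low_mid)
    show "prob B \<le> 1 / real m" unfolding B_def by (rule prob_few_mid_at_1)
    show "prob (C j) \<le> 1 / (real m)^2" if "j \<in> {2..m}" for j
      unfolding C_def using that by (rule prob_many_mid_at)
  qed auto
  also have "(\<Sum>j\<in>{2..m}. 1 / (real m)^2) \<le> 1 / real m"
    using m_real_ge_5 by (simp add: of_nat_diff power2_eq_square field_simps)
  finally show ?thesis by simp
qed

lemma exp_dist_le:
  assumes "j \<in> {2..m}"
  shows "exp_dist n_voters m hard_distr hard_profile j \<le> 38 / real m"
proof -
  interpret prob_space "sample_space n_voters m hard_distr" by (rule prob_space_sample_space)
  have j: "j \<in> {1..m}" using assms by simp
  have "exp_dist n_voters m hard_distr hard_profile j \<le> expectation (\<lambda>x. 35 / real m + of_bool (\<not> typical x))"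
    unfolding exp_dist_def
  proof (intro integral_mono_AE integrable_dist_alt[OF is_profile_hard_profile j]
      Bochner_Integration.integrable_add integrable_const integrable_of_bool)
    show "AE x in sample_space n_voters m hard_distr.
        dist_alt n_voters m hard_profile x j \<le> 35 / real m + of_bool (\<not> typical x)"
      using AE_dist_alt_unit[OF is_profile_hard_profile]
    proof eventually_elim
      case (elim x)
      show ?case
      proof (cases "typical x")
        case True
        then show ?thesis using dist_alt_typical_le[OF _ assms] by simp
      next
        case False
        have "dist_alt n_voters m hard_profile x j \<le> 1" "0 \<le> 35 / real m"
          and "of_bool (\<not> typical x) = (1::real)" using elim j False by auto
        then show ?thesis by linarith
      qed
    qed
  qed measurable
  also have "\<dots> = 35 / real m + prob {x\<in>space (sample_space n_voters m hard_distr). \<not> typical x}"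
    using integral_of_bool[of "\<lambda>x. \<not> typical x"]
    by (subst Bochner_Integration.integral_add) (auto simp: prob_space)
  also have "\<dots> \<le> 38 / real m" using prob_not_typical by simp
  finally show ?thesis .
qed

lemma exp_dist_1_ge: "1 / 20 \<le> exp_dist n_voters m hard_distr hard_profile 1"
proof -
  interpret prob_space "sample_space n_voters m hard_distr" by (rule prob_space_sample_space)
  have one: "(1::nat) \<in> {1..m}" using m_ge_5 by simp
  have "1 / 20 \<le> 1 / 8 * (1 - 3 / real m)" using m_real_ge_5 by (simp add: field_simps)
  also have "\<dots> \<le> 1 / 8 * prob {x\<in>space (sample_space n_voters m hard_distr). typical x}"
    using prob_not_typical prob_neg[of typical] by simp
  also have "\<dots> = expectation (\<lambda>x. 1 / 8 * of_bool (typical x))"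
    by (simp add: integral_of_bool)
  also have "\<dots> \<le> exp_dist n_voters m hard_distr hard_profile 1"
    unfolding exp_dist_def
  proof (intro integral_mono_AE integrable_dist_alt[OF is_profile_hard_profile one]
      integrable_mult_right integrable_of_bool)
    show "AE x in sample_space n_voters m hard_distr. 1 / 8 * of_bool (typical x) \<le> dist_alt n_voters m hard_profile x 1"
      using AE_dist_alt_unit[OF is_profile_hard_profile]
    proof eventually_elim
      case (elim x)
      then show ?case using dist_alt_1_typical_ge[of x] one by (cases "typical x") auto
    qed
  qed measurable
  finally show ?thesis .
qed

lemma AE_max_sw_pos: "AE x in sample_space n_voters m hard_distr. 0 < max_sw n_voters m hard_profile x"
  using AE_util_values[OF is_profile_hard_profile AE_hard_distr]
proof eventually_elim
  case (elim x)
  have one: "(1::nat) \<in> {1..m}" using m_ge_5 by simp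
  have "0 < sw n_voters m hard_profile x 1"
    unfolding sw_def using elim one n_voters_pos val_low_pos val_mid_pos
    by (intro sum_pos) force+
  then show ?case using sw_le_max_sw[OF one] by (rule order.strict_trans2)
qed

lemma exp_dist_ewm_rule_le:
  assumes "ewm_rule n_voters m hard_distr f"
  shows "exp_dist n_voters m hard_distr hard_profile (f hard_profile)
    \<le> 760 / real m * Max ((\<lambda>j. exp_dist n_voters m hard_distr hard_profile j) ` {1..m})"
proof -
  have "exp_dist n_voters m hard_distr hard_profile (f hard_profile) \<le> 38 / real m"
    using exp_dist_le ewm_rule_avoids_1[OF assms] by blast
  also have "\<dots> = 760 / real m * (1 / 20)" by simp
  also have "\<dots> \<le> 760 / real m * exp_dist n_voters m hard_distr hard_profile 1"
    using exp_dist_1_ge by (intro mult_left_mono) auto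
  also have "\<dots> \<le> 760 / real m * Max ((\<lambda>j. exp_dist n_voters m hard_distr hard_profile j) ` {1..m})"
    using m_ge_5 by (intro mult_left_mono Max_ge) auto
  finally show ?thesis .
qed

end

theorem theorem2:
  shows "\<exists>C::real. C > 0 \<and>
    (\<forall>m::nat. m \<ge> 5 \<longrightarrow>
      (\<exists>n::nat. \<exists>D::real measure. \<exists>\<sigma>.
         n \<ge> 1 \<and> distr_on_unit D \<and> is_profile n m \<sigma> \<and>
         (AE x in sample_space n m D. max_sw n m \<sigma> x > 0) \<and>
         (\<forall>f. ewm_rule n m D f \<longrightarrow>
            exp_dist n m D \<sigma> (f \<sigma>) \<le> C / real m * Max ((\<lambda>j. exp_dist n m D \<sigma> j) ` {1..m}))))"
proof (intro exI[of _ "760::real"] conjI allI impI)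
  fix m :: nat assume "m \<ge> 5"
  then interpret hard_instance m by unfold_locales
  show "\<exists>n D \<sigma>. n \<ge> 1 \<and> distr_on_unit D \<and> is_profile n m \<sigma> \<and>
      (AE x in sample_space n m D. max_sw n m \<sigma> x > 0) \<and>
      (\<forall>f. ewm_rule n m D f \<longrightarrow>
         exp_dist n m D \<sigma> (f \<sigma>) \<le> 760 / real m * Max ((\<lambda>j. exp_dist n m D \<sigma> j) ` {1..m}))"
    using n_voters_pos distr_on_unit_hard_distr is_profile_hard_profile AE_max_sw_pos exp_dist_ewm_rule_le
    by (intro exI[of _ n_voters] exI[of _ hard_distr] exI[of _ hard_profile]) auto
qed simp

end
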